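(* Let $M$ be a reduced irreducible affine scheme of finite type over $\mathbb C$ and let $\Gamma$ be a finitely presented group acting on $M$ by algebraic automorphisms. If there is one point of $M$ whose $\Gamma$-orbit is Zariski dense in $M$, then there is a countable union of proper closed subvarieties of $M$ such that every point $x\in M$ not lying in this countable union has Zariski dense $\Gamma$-orbit. *)

theory Defs
  imports "HOL-Analysis.Finite_Cartesian_Product" "HOL-Algebra.Generated_Groups"
begin

inductive_set polyfun :: "(complex^'n \<Rightarrow> complex) set" where
  pf_const: "(\<lambda>x. c) \<in> polyfun"
| pf_coord: "(\<lambda>x. x $ i) \<in> polyfun"
| pf_add: "p \<in> polyfun \<Longrightarrow> q \<in> polyfun \<Longrightarrow> (\<lambda>x. p x + q x) \<in> polyfun"
| pf_mult: "p \<in> polyfun \<Longrightarrow> q \<in> polyfun \<Longrightarrow> (\<lambda>x. p x * q x) \<in> polyfun"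

definition zclosed :: "(complex^'n) set \<Rightarrow> bool" where
  "zclosed S \<longleftrightarrow> (\<exists>P \<subseteq> polyfun. S = {x. \<forall>p\<in>P. p x = 0})"

definition zclosure :: "(complex^'n) set \<Rightarrow> (complex^'n) set" where
  "zclosure S = \<Inter>{C. zclosed C \<and> S \<subseteq> C}"

definition zirreducible :: "(complex^'n) set \<Rightarrow> bool" where
  "zirreducible M \<longleftrightarrow> M \<noteq> {} \<and>
     (\<forall>A B. zclosed A \<and> zclosed B \<and> M \<subseteq> A \<union> B \<longrightarrow> M \<subseteq> A \<or> M \<subseteq> B)"

definition polymap :: "(complex^'n \<Rightarrow> complex^'n) \<Rightarrow> bool" where
  "polymap F \<longleftrightarrow> (\<forall>i. (\<lambda>x. F x $ i) \<in> polyfun)"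

definition alg_aut :: "(complex^'n) set \<Rightarrow> (complex^'n \<Rightarrow> complex^'n) \<Rightarrow> bool" where
  "alg_aut M f \<longleftrightarrow> (\<exists>F G. polymap F \<and> polymap G \<and> F ` M \<subseteq> M \<and> G ` M \<subseteq> M \<and>
      (\<forall>x\<in>M. G (F x) = x \<and> F (G x) = x) \<and> (\<forall>x\<in>M. f x = F x))"

text \<open>Words in generators 0..n-1: letters (i, b), b = True meaning the inverse letter.\<close>
definition eval_word :: "('g, 'b) monoid_scheme \<Rightarrow> (nat \<Rightarrow> 'g) \<Rightarrow> (nat \<times> bool) list \<Rightarrow> 'g" where
  "eval_word G gen w =
     foldr (\<lambda>(i, b) acc. (if b then inv\<^bsub>G\<^esub> (gen i) else gen i) \<otimes>\<^bsub>G\<^esub> acc) w \<one>\<^bsub>G\<^esub>"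

inductive_set pres_step :: "(nat \<times> bool) list set \<Rightarrow> ((nat \<times> bool) list \<times> (nat \<times> bool) list) set"
  for R where
  ins_pair: "(u @ v, u @ [(i, b), (i, \<not> b)] @ v) \<in> pres_step R"
| ins_rel: "r \<in> R \<Longrightarrow> (u @ v, u @ r @ v) \<in> pres_step R"

definition pres_equiv :: "(nat \<times> bool) list set \<Rightarrow> ((nat \<times> bool) list \<times> (nat \<times> bool) list) set" where
  "pres_equiv R = (pres_step R \<union> (pres_step R)\<inverse>)\<^sup>*"

text \<open>G is finitely presented: generated by finitely many elements gen 0..gen(n-1), and
  a word in them is trivial in G iff it is trivial in the group presented by the finite
  relator set R (i.e. G is isomorphic to the group with presentation gens | R).\<close>
definition fin_presented :: "('g, 'b) monoid_scheme \<Rightarrow> bool" where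
  "fin_presented G \<longleftrightarrow> (\<exists>n gen R. finite R \<and> (\<forall>r\<in>R. fst ` set r \<subseteq> {..<n}) \<and>
     gen ` {..<n} \<subseteq> carrier G \<and> carrier G = generate G (gen ` {..<n}) \<and>
     (\<forall>w. fst ` set w \<subseteq> {..<n} \<longrightarrow>
          (eval_word G gen w = \<one>\<^bsub>G\<^esub> \<longleftrightarrow> (w, []) \<in> pres_equiv R)))"

end

theory Submission
  imports Defs "Jordan_Normal_Form.Determinant" "HOL-Library.Countable"
begin

text \<open>
  Fix \<open>x\<^sub>0\<close> with dense orbit. For a finite set \<open>K\<close> of monomials choose \<open>m\<^sub>1, \<dots>, m\<^sub>s \<in> K\<close>
  and group elements \<open>g\<^sub>1, \<dots>, g\<^sub>s\<close> with \<open>det (m\<^sub>j (g\<^sub>i x\<^sub>0)) \<noteq> 0\<close> and \<open>s\<close> maximal. By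
  maximality every monomial in \<open>K\<close> agrees on the orbit of \<open>x\<^sub>0\<close>, hence by density on \<open>M\<close>,
  with a fixed linear combination of \<open>m\<^sub>1, \<dots>, m\<^sub>s\<close>. The determinant \<open>D\<^sub>K x = det (m\<^sub>j (g\<^sub>i x))\<close>
  is polynomial on \<open>M\<close> and nonzero at \<open>x\<^sub>0\<close>, so \<open>M \<inter> {D\<^sub>K = 0}\<close> is a proper closed subset.
  If the orbit of \<open>x\<close> is not dense, some polynomial \<open>p\<close> vanishes on it but not on \<open>M\<close>; taking
  for \<open>K\<close> the monomials of \<open>p\<close>, on \<open>M\<close> we get \<open>p = \<Sum> b\<^sub>j m\<^sub>j\<close> with \<open>b \<noteq> 0\<close>, and
  \<open>p (g\<^sub>i x) = 0\<close> for all \<open>i\<close> forces \<open>D\<^sub>K x = 0\<close>. There are countably many finite sets of monomials.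
\<close>

definition monomial :: "('n::finite \<Rightarrow> nat) \<Rightarrow> complex^'n \<Rightarrow> complex" where
  "monomial a x = (\<Prod>i\<in>UNIV. (x $ i) ^ a i)"

lemma polyfun_sum:
  "finite S \<Longrightarrow> (\<And>a. a \<in> S \<Longrightarrow> f a \<in> polyfun) \<Longrightarrow> (\<lambda>x. \<Sum>a\<in>S. f a x) \<in> polyfun"
proof (induction S rule: finite_induct)
  case empty
  then show ?case using pf_const[of 0] by simp
next
  case (insert a S)
  then show ?case using pf_add[of "f a" "\<lambda>x. \<Sum>a\<in>S. f a x"] by simp
qed

lemma polyfun_prod:
  "finite S \<Longrightarrow> (\<And>a. a \<in> S \<Longrightarrow> f a \<in> polyfun) \<Longrightarrow> (\<lambda>x. \<Prod>a\<in>S. f a x) \<in> polyfun"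
proof (induction S rule: finite_induct)
  case empty
  then show ?case using pf_const[of 1] by simp
next
  case (insert a S)
  then show ?case using pf_mult[of "f a" "\<lambda>x. \<Prod>a\<in>S. f a x"] by simp
qed

lemma polyfun_power: "p \<in> polyfun \<Longrightarrow> (\<lambda>x. p x ^ k) \<in> polyfun"
  using polyfun_prod[of "{..<k}" "\<lambda>_. p"] by simp

lemma polyfun_scale: "p \<in> polyfun \<Longrightarrow> (\<lambda>x. c * p x) \<in> polyfun"
  by (rule pf_mult[OF pf_const])

lemma polyfun_diff: "p \<in> polyfun \<Longrightarrow> q \<in> polyfun \<Longrightarrow> (\<lambda>x. p x - q x) \<in> polyfun"
  using pf_add[of p "\<lambda>x. (-1) * q x"] polyfun_scale[of q "-1"] by simp

lemma polyfun_monomial: "monomial a \<in> polyfun"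
  unfolding monomial_def[abs_def] by (intro polyfun_prod polyfun_power pf_coord) simp

lemma polyfun_compose: "p \<in> polyfun \<Longrightarrow> polymap F \<Longrightarrow> (\<lambda>x. p (F x)) \<in> polyfun"
  by (induction p rule: polyfun.induct) (simp_all add: polymap_def polyfun.intros)

lemma monomial_zero: "monomial (\<lambda>_. 0) x = 1"
  by (simp add: monomial_def)

lemma monomial_coord: "monomial (\<lambda>j. if j = i then 1 else 0) x = x $ i"
  by (simp add: monomial_def if_distrib prod.delta cong: if_cong)

lemma monomial_add: "monomial (\<lambda>i. a i + b i) x = monomial a x * monomial b x"
  by (simp add: monomial_def power_add prod.distrib)

lemma sum_monomials_regroup:
  assumes "finite I"
  shows "\<exists>c'. \<forall>x. (\<Sum>i\<in>I. c i * monomial (e i) x) = (\<Sum>a\<in>e ` I. c' a * monomial a x)"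
proof -
  have "(\<Sum>i\<in>I. c i * monomial (e i) x) = (\<Sum>a\<in>e ` I. (\<Sum>i\<in>{i\<in>I. e i = a}. c i) * monomial a x)" for x
  proof -
    have "(\<Sum>i\<in>I. c i * monomial (e i) x) = (\<Sum>a\<in>e ` I. \<Sum>i\<in>{i\<in>I. e i = a}. c i * monomial (e i) x)"
      using assms by (rule sum.image_gen)
    also have "\<dots> = (\<Sum>a\<in>e ` I. (\<Sum>i\<in>{i\<in>I. e i = a}. c i) * monomial a x)"
      by (auto simp: sum_distrib_right intro!: sum.cong)
    finally show ?thesis .
  qed
  then show ?thesis
    by (intro exI[of _ "\<lambda>a. \<Sum>i\<in>{i\<in>I. e i = a}. c i"]) blast
qed

lemma polyfun_monomial_expansion:
  assumes "p \<in> polyfun"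
  shows "\<exists>F c. finite F \<and> (\<forall>x. p x = (\<Sum>a\<in>F. c a * monomial a x))"
  using assms
proof (induction p rule: polyfun.induct)
  case (pf_const c)
  show ?case
    by (intro exI[of _ "{\<lambda>_. 0}"] exI[of _ "\<lambda>_. c"]) (simp add: monomial_zero)
next
  case (pf_coord i)
  show ?case
    by (intro exI[of _ "{\<lambda>j. if j = i then 1 else 0}"] exI[of _ "\<lambda>_. 1"]) (simp add: monomial_coord)
next
  case (pf_add p q)
  then obtain F c G d where "finite F" "finite G"
    and p: "\<And>x. p x = (\<Sum>a\<in>F. c a * monomial a x)" and q: "\<And>x. q x = (\<Sum>a\<in>G. d a * monomial a x)"
    by blast
  let ?I = "F <+> G" and ?c = "case_sum c d" and ?e = "case_sum id id"
  have "finite ?I" using \<open>finite F\<close> \<open>finite G\<close> by simp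
  then obtain c' where c': "\<And>x. (\<Sum>i\<in>?I. ?c i * monomial (?e i) x) = (\<Sum>a\<in>?e ` ?I. c' a * monomial a x)"
    using sum_monomials_regroup[of ?I ?c ?e] by blast
  have "p x + q x = (\<Sum>i\<in>?I. ?c i * monomial (?e i) x)" for x
    by (simp add: p q sum.Plus \<open>finite F\<close> \<open>finite G\<close> comp_def)
  then show ?case
    using \<open>finite ?I\<close> by (intro exI[of _ "?e ` ?I"] exI[of _ c']) (simp add: c')
next
  case (pf_mult p q)
  then obtain F c G d where "finite F" "finite G"
    and p: "\<And>x. p x = (\<Sum>a\<in>F. c a * monomial a x)" and q: "\<And>x. q x = (\<Sum>a\<in>G. d a * monomial a x)"
    by blast
  let ?e = "\<lambda>(a, b). \<lambda>i. a i + b i"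
  have "p x * q x = (\<Sum>(a, b)\<in>F \<times> G. c a * d b * monomial (?e (a, b)) x)" for x
  proof -
    have "p x * q x = (\<Sum>a\<in>F. \<Sum>b\<in>G. (c a * monomial a x) * (d b * monomial b x))"
      by (simp only: p q sum_product)
    also have "\<dots> = (\<Sum>(a, b)\<in>F \<times> G. (c a * monomial a x) * (d b * monomial b x))"
      by (rule sum.cartesian_product)
    also have "\<dots> = (\<Sum>(a, b)\<in>F \<times> G. c a * d b * monomial (?e (a, b)) x)"
      by (rule sum.cong[OF refl]) (auto simp: monomial_add mult_ac)
    finally show ?thesis .
  qed
  moreover have "finite (F \<times> G)" using \<open>finite F\<close> \<open>finite G\<close> by simp
  moreover obtain c' where "\<And>x. (\<Sum>(a, b)\<in>F \<times> G. c a * d b * monomial (?e (a, b)) x)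
      = (\<Sum>h\<in>?e ` (F \<times> G). c' h * monomial h x)"
    using sum_monomials_regroup[of "F \<times> G" "\<lambda>(a, b). c a * d b" ?e] \<open>finite (F \<times> G)\<close>
    by (auto simp: split_beta)
  ultimately show ?case
    by (intro exI[of _ "?e ` (F \<times> G)"] exI[of _ c']) simp
qed

lemma polyfun_det:
  assumes "\<And>i j. i < s \<Longrightarrow> j < s \<Longrightarrow> e i j \<in> polyfun"
  shows "(\<lambda>x. det (mat s s (\<lambda>(i, j). e i j x))) \<in> polyfun"
proof -
  have "det (mat s s (\<lambda>(i, j). e i j x)) =
      (\<Sum>p\<in>{p. p permutes {0..<s}}. signof p * (\<Prod>i\<in>{0..<s}. e i (p i) x))" for x
    unfolding det_def'[OF mat_carrier]
    by (intro sum.cong refl arg_cong[where f = "(*) _"] prod.cong) (auto simp: permutes_in_image)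
  moreover have "(\<lambda>x. \<Sum>p\<in>{p. p permutes {0..<s}}. signof p * (\<Prod>i\<in>{0..<s}. e i (p i) x)) \<in> polyfun"
  proof (rule polyfun_sum)
    fix p assume "p \<in> {p. p permutes {0..<s}}"
    then have "e i (p i) \<in> polyfun" if "i \<in> {0..<s}" for i
      using assms that by (simp add: permutes_in_image)
    then show "(\<lambda>x. signof p * (\<Prod>i\<in>{0..<s}. e i (p i) x)) \<in> polyfun"
      by (intro polyfun_scale polyfun_prod) simp_all
  qed (simp add: finite_permutations)
  ultimately show ?thesis by simp
qed

lemma zclosed_zero_set: "p \<in> polyfun \<Longrightarrow> zclosed {x. p x = 0}"
  unfolding zclosed_def by (intro exI[of _ "{p}"]) auto

lemma zclosed_Int:
  assumes "zclosed A" "zclosed B"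
  shows "zclosed (A \<inter> B)"
proof -
  obtain P Q where "P \<subseteq> polyfun" "A = {x. \<forall>p\<in>P. p x = 0}" "Q \<subseteq> polyfun" "B = {x. \<forall>p\<in>Q. p x = 0}"
    using assms unfolding zclosed_def by blast
  then show ?thesis
    unfolding zclosed_def by (intro exI[of _ "P \<union> Q"]) auto
qed

lemma zclosed_Int_zero_set_on:
  assumes "zclosed M" "q \<in> polyfun" "\<forall>x\<in>M. p x = q x"
  shows "zclosed (M \<inter> {x. p x = 0})"
proof -
  have "M \<inter> {x. p x = 0} = M \<inter> {x. q x = 0}" using assms(3) by auto
  then show ?thesis using assms(1,2) by (simp add: zclosed_Int zclosed_zero_set)
qed

lemma zclosure_least: "zclosed C \<Longrightarrow> S \<subseteq> C \<Longrightarrow> zclosure S \<subseteq> C"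
  unfolding zclosure_def by blast

lemma polyfun_zero_on_zclosure:
  assumes "p \<in> polyfun" "\<forall>s\<in>S. p s = 0" "x \<in> zclosure S"
  shows "p x = 0"
  using zclosure_least[OF zclosed_zero_set[OF assms(1)]] assms(2,3) by blast

lemma ex_polyfun_vanishing_not_dense:
  assumes "zclosed M" "S \<subseteq> M" "zclosure S \<noteq> M"
  shows "\<exists>p\<in>polyfun. (\<forall>s\<in>S. p s = 0) \<and> (\<exists>y\<in>M. p y \<noteq> 0)"
proof -
  obtain y where "y \<in> M" "y \<notin> zclosure S"
    using assms zclosure_least by blast
  then obtain C where "zclosed C" "S \<subseteq> C" "y \<notin> C"
    unfolding zclosure_def by blast
  then obtain P where "P \<subseteq> polyfun" "C = {x. \<forall>p\<in>P. p x = 0}"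
    unfolding zclosed_def by blast
  then show ?thesis using \<open>S \<subseteq> C\<close> \<open>y \<notin> C\<close> \<open>y \<in> M\<close> by blast
qed

lemma det_mat_eq_0_iff:
  fixes f :: "nat \<times> nat \<Rightarrow> 'a::idom"
  shows "det (mat s s f) = 0 \<longleftrightarrow> (\<exists>v. (\<exists>j<s. v j \<noteq> 0) \<and> (\<forall>i<s. (\<Sum>j<s. f (i, j) * v j) = 0))"
proof -
  have row: "(mat s s f *\<^sub>v w) $ i = (\<Sum>j<s. f (i, j) * w $ j)" if "i < s" "w \<in> carrier_vec s" for i w
    using that by (simp add: scalar_prod_def atLeast0LessThan)
  have "(\<exists>w. w \<in> carrier_vec s \<and> w \<noteq> 0\<^sub>v s \<and> mat s s f *\<^sub>v w = 0\<^sub>v s) \<longleftrightarrow>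
      (\<exists>v. (\<exists>j<s. v j \<noteq> 0) \<and> (\<forall>i<s. (\<Sum>j<s. f (i, j) * v j) = 0))"
  proof
    assume "\<exists>w. w \<in> carrier_vec s \<and> w \<noteq> 0\<^sub>v s \<and> mat s s f *\<^sub>v w = 0\<^sub>v s"
    then obtain w where w: "w \<in> carrier_vec s" "w \<noteq> 0\<^sub>v s" "mat s s f *\<^sub>v w = 0\<^sub>v s" by blast
    then have "\<exists>j<s. w $ j \<noteq> 0" by (metis carrier_vecD eq_vecI index_zero_vec)
    moreover have "\<forall>i<s. (\<Sum>j<s. f (i, j) * w $ j) = 0"
      using w row by (metis index_zero_vec(1))
    ultimately show "\<exists>v. (\<exists>j<s. v j \<noteq> 0) \<and> (\<forall>i<s. (\<Sum>j<s. f (i, j) * v j) = 0)" by blast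
  next
    assume "\<exists>v. (\<exists>j<s. v j \<noteq> 0) \<and> (\<forall>i<s. (\<Sum>j<s. f (i, j) * v j) = 0)"
    then obtain v j where v: "j < s" "v j \<noteq> 0" "\<forall>i<s. (\<Sum>j<s. f (i, j) * v j) = 0" by blast
    have "vec s v \<noteq> 0\<^sub>v s" using v(1,2) by (metis index_vec index_zero_vec(1))
    moreover have "mat s s f *\<^sub>v vec s v = 0\<^sub>v s"
      using v(3) row by (intro eq_vecI) auto
    ultimately show "\<exists>w. w \<in> carrier_vec s \<and> w \<noteq> 0\<^sub>v s \<and> mat s s f *\<^sub>v w = 0\<^sub>v s"
      using vec_carrier by blast
  qed
  then show ?thesis using det_0_iff_vec_prod_zero[OF mat_carrier] by blast
qed

lemma det_mat_nonzero_solvable: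
  fixes f :: "nat \<times> nat \<Rightarrow> 'a::field"
  assumes "det (mat s s f) \<noteq> 0"
  shows "\<exists>a. \<forall>i<s. (\<Sum>j<s. f (i, j) * a j) = u i"
proof -
  let ?A = "mat s s f"
  have A: "?A \<in> carrier_mat s s" by simp
  obtain B where B: "B \<in> carrier_mat s s" "?A * B = 1\<^sub>m s"
    using det_non_zero_imp_unit[OF A assms, of "()"] unfolding Units_def ring_mat_def by auto
  let ?a = "B *\<^sub>v vec s u"
  have "?A *\<^sub>v ?a = (?A * B) *\<^sub>v vec s u"
    using B by (intro assoc_mult_mat_vec[symmetric, OF A]) auto
  then have sol: "?A *\<^sub>v ?a = vec s u" using B(2) by simp
  show ?thesis
  proof (intro exI[of _ "vec_index ?a"] allI impI)
    fix i assume "i < s"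
    then have "(\<Sum>j<s. f (i, j) * vec_index ?a j) = vec_index (?A *\<^sub>v ?a) i"
      using B(1) by (simp add: scalar_prod_def atLeast0LessThan)
    then show "(\<Sum>j<s. f (i, j) * vec_index ?a j) = u i"
      using sol \<open>i < s\<close> by simp
  qed
qed

lemma det_eq_0_if_vanishing_combination:
  fixes u :: "nat \<Rightarrow> 'x \<Rightarrow> 'a::idom"
  assumes "\<forall>z\<in>M. p z = (\<Sum>j<s. b j * u j z)" "y \<in> M" "p y \<noteq> 0"
    and "\<forall>i<s. ys i \<in> M \<and> p (ys i) = 0"
  shows "det (mat s s (\<lambda>(i, j). u j (ys i))) = 0"
proof -
  have "\<exists>j<s. b j \<noteq> 0"
    using assms(1-3) by (metis (no_types, lifting) mult_eq_0_iff sum.neutral lessThan_iff)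
  moreover have "\<forall>i<s. (\<Sum>j<s. u j (ys i) * b j) = 0"
  proof (intro allI impI)
    fix i assume "i < s"
    then have "p (ys i) = (\<Sum>j<s. b j * u j (ys i))" "p (ys i) = 0"
      using assms(1,4) by auto
    then show "(\<Sum>j<s. u j (ys i) * b j) = 0" by (simp add: mult.commute)
  qed
  ultimately show ?thesis
    by (subst det_mat_eq_0_iff) auto
qed

definition colloc_mat :: "('k \<Rightarrow> 'x \<Rightarrow> 'a) \<Rightarrow> 'k list \<Rightarrow> 'x list \<Rightarrow> 'a mat" where
  "colloc_mat f ks xs = mat (length ks) (length ks) (\<lambda>(i, j). f (ks ! j) (xs ! i))"

definition nonsingular_colloc ::
    "('k \<Rightarrow> 'x \<Rightarrow> 'a::comm_ring_1) \<Rightarrow> 'k set \<Rightarrow> 'x set \<Rightarrow> 'k list \<Rightarrow> 'x list \<Rightarrow> bool" where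
  "nonsingular_colloc f K X ks xs \<longleftrightarrow> set ks \<subseteq> K \<and> set xs \<subseteq> X \<and> length xs = length ks \<and>
     det (colloc_mat f ks xs) \<noteq> 0"

definition maximal_nonsingular_colloc ::
    "('k \<Rightarrow> 'x \<Rightarrow> 'a::comm_ring_1) \<Rightarrow> 'k set \<Rightarrow> 'x set \<Rightarrow> 'k list \<Rightarrow> 'x list \<Rightarrow> bool" where
  "maximal_nonsingular_colloc f K X ks xs \<longleftrightarrow> nonsingular_colloc f K X ks xs \<and>
     (\<forall>ks' xs'. nonsingular_colloc f K X ks' xs' \<longrightarrow> length ks' \<le> length ks)"

lemma distinct_if_det_colloc_nonzero:
  assumes "det (colloc_mat f ks xs) \<noteq> 0"
  shows "distinct ks"
proof (rule ccontr)
  assume "\<not> distinct ks"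
  then obtain i j where "i < length ks" "j < length ks" "i \<noteq> j" "ks ! i = ks ! j"
    by (auto simp: distinct_conv_nth)
  then have "det (colloc_mat f ks xs) = 0"
    unfolding colloc_mat_def by (intro det_identical_columns[of _ "length ks" i j]) auto
  then show False using assms by contradiction
qed

lemma ex_maximal_nonsingular_colloc:
  assumes "finite K"
  shows "\<exists>ks xs. maximal_nonsingular_colloc f K X ks xs"
proof -
  let ?P = "\<lambda>(ks, xs). nonsingular_colloc f K X ks xs"
  have "?P ([], [])"
    by (simp add: nonsingular_colloc_def colloc_mat_def)
  moreover have "length (fst kx) < Suc (card K)" if "?P kx" for kx
  proof -
    have "distinct (fst kx)" "set (fst kx) \<subseteq> K"
      using that distinct_if_det_colloc_nonzero by (auto simp: nonsingular_colloc_def split: prod.splits)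
    then show ?thesis using card_mono[OF assms] by (metis distinct_card less_Suc_eq_le)
  qed
  ultimately obtain kx where "?P kx" "\<forall>kx'. ?P kx' \<longrightarrow> length (fst kx') \<le> length (fst kx)"
    using ex_has_greatest_nat[of ?P "([], [])" "\<lambda>kx. length (fst kx)" "Suc (card K)"] by blast
  then show ?thesis
    unfolding maximal_nonsingular_colloc_def by (metis case_prod_conv prod.collapse fst_conv)
qed

lemma det_colloc_snoc_nonzero:
  fixes f :: "'k \<Rightarrow> 'x \<Rightarrow> 'a::field"
  assumes len: "length xs = length ks"
    and nonsing: "det (colloc_mat f ks xs) \<noteq> 0"
    and a: "\<forall>i<length ks. (\<Sum>j<length ks. f (ks ! j) (xs ! i) * a j) = f k (xs ! i)"
    and off: "f k x \<noteq> (\<Sum>j<length ks. a j * f (ks ! j) x)"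
  shows "det (colloc_mat f (ks @ [k]) (xs @ [x])) \<noteq> 0"
proof
  let ?s = "length ks"
  assume "det (colloc_mat f (ks @ [k]) (xs @ [x])) = 0"
  then obtain v where v_nz: "\<exists>j<Suc ?s. v j \<noteq> 0"
    and ker: "\<forall>i<Suc ?s. (\<Sum>j<Suc ?s. f ((ks @ [k]) ! j) ((xs @ [x]) ! i) * v j) = 0"
    by (auto simp: colloc_mat_def det_mat_eq_0_iff)
  have ker_old: "(\<Sum>j<?s. f (ks ! j) (xs ! i) * v j) + f k (xs ! i) * v ?s = 0" if "i < ?s" for i
    using ker[rule_format, of i] that len by (simp add: nth_append)
  have ker_new: "(\<Sum>j<?s. f (ks ! j) x * v j) + f k x * v ?s = 0"
    using ker[rule_format, of ?s] len by (simp add: nth_append)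
  have "\<forall>i<?s. (\<Sum>j<?s. f (ks ! j) (xs ! i) * (v j + v ?s * a j)) = 0"
  proof (intro allI impI)
    fix i assume "i < ?s"
    then have "0 = (\<Sum>j<?s. f (ks ! j) (xs ! i) * v j) + f k (xs ! i) * v ?s"
      using ker_old[OF \<open>i < ?s\<close>] by simp
    also have "\<dots> = (\<Sum>j<?s. f (ks ! j) (xs ! i) * v j) + (\<Sum>j<?s. f (ks ! j) (xs ! i) * a j) * v ?s"
      using a \<open>i < ?s\<close> by simp
    also have "\<dots> = (\<Sum>j<?s. f (ks ! j) (xs ! i) * (v j + v ?s * a j))"
      by (simp add: distrib_left sum.distrib sum_distrib_left sum_distrib_right mult_ac)
    finally show "(\<Sum>j<?s. f (ks ! j) (xs ! i) * (v j + v ?s * a j)) = 0" by simp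
  qed
  then have "\<forall>j<?s. v j + v ?s * a j = 0"
    using nonsing by (auto simp: colloc_mat_def det_mat_eq_0_iff)
  then have v_old: "v j = - (v ?s * a j)" if "j < ?s" for j
    using that by (simp add: eq_neg_iff_add_eq_0)
  have "0 = (\<Sum>j<?s. f (ks ! j) x * v j) + f k x * v ?s"
    using ker_new by simp
  also have "\<dots> = v ?s * (f k x - (\<Sum>j<?s. a j * f (ks ! j) x))"
    by (simp add: v_old sum_distrib_left right_diff_distrib sum_negf mult_ac)
  finally have "v ?s = 0" using off by simp
  then show False using v_nz v_old by (metis less_Suc_eq mult_zero_left neg_0_equal_iff_equal)
qed

lemma maximal_nonsingular_colloc_span:
  fixes f :: "'k \<Rightarrow> 'x \<Rightarrow> 'a::field"
  assumes "maximal_nonsingular_colloc f K X ks xs" "k \<in> K"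
  shows "\<exists>a. \<forall>x\<in>X. f k x = (\<Sum>j<length ks. a j * f (ks ! j) x)"
proof -
  have ns: "nonsingular_colloc f K X ks xs"
    and max: "\<And>ks' xs'. nonsingular_colloc f K X ks' xs' \<Longrightarrow> length ks' \<le> length ks"
    using assms(1) by (auto simp: maximal_nonsingular_colloc_def)
  have "det (mat (length ks) (length ks) (\<lambda>(i, j). f (ks ! j) (xs ! i))) \<noteq> 0"
    using ns by (simp add: nonsingular_colloc_def colloc_mat_def)
  then obtain a where a: "\<forall>i<length ks. (\<Sum>j<length ks. f (ks ! j) (xs ! i) * a j) = f k (xs ! i)"
    using det_mat_nonzero_solvable[of "length ks" _ "\<lambda>i. f k (xs ! i)"] by fastforce
  have "f k x = (\<Sum>j<length ks. a j * f (ks ! j) x)" if "x \<in> X" for x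
  proof (rule ccontr)
    assume "f k x \<noteq> (\<Sum>j<length ks. a j * f (ks ! j) x)"
    then have "nonsingular_colloc f K X (ks @ [k]) (xs @ [x])"
      using ns det_colloc_snoc_nonzero[OF _ _ a] \<open>k \<in> K\<close> \<open>x \<in> X\<close>
      by (auto simp: nonsingular_colloc_def)
    then show False using max by fastforce
  qed
  then show ?thesis by blast
qed

lemma maximal_nonsingular_colloc_monomial_span_on_zclosure:
  fixes \<phi> :: "'g \<Rightarrow> complex^'n"
  assumes dense: "zclosure (\<phi> ` X) = M"
    and max: "maximal_nonsingular_colloc (\<lambda>a g. monomial a (\<phi> g)) K X ks gs" and "a \<in> K"
  shows "\<exists>C. \<forall>z\<in>M. monomial a z = (\<Sum>j<length ks. C j * monomial (ks ! j) z)"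
proof -
  obtain C where C: "\<forall>g\<in>X. monomial a (\<phi> g) = (\<Sum>j<length ks. C j * monomial (ks ! j) (\<phi> g))"
    using maximal_nonsingular_colloc_span[OF max \<open>a \<in> K\<close>] by blast
  have "(\<lambda>z. monomial a z - (\<Sum>j<length ks. C j * monomial (ks ! j) z)) \<in> polyfun"
    by (intro polyfun_diff polyfun_sum polyfun_scale polyfun_monomial) simp
  moreover have "\<forall>z\<in>\<phi> ` X. monomial a z - (\<Sum>j<length ks. C j * monomial (ks ! j) z) = 0"
    using C by auto
  ultimately have "monomial a z - (\<Sum>j<length ks. C j * monomial (ks ! j) z) = 0" if "z \<in> M" for z
    using polyfun_zero_on_zclosure that dense by blast
  then show ?thesis by auto
qed

lemma det_colloc_eq_0_if_vanishing:
  fixes \<phi> \<psi> :: "'g \<Rightarrow> complex^'n"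
  assumes dense: "zclosure (\<phi> ` X) = M"
    and max: "maximal_nonsingular_colloc (\<lambda>a g. monomial a (\<phi> g)) K X ks gs"
    and p: "\<forall>z. p z = (\<Sum>a\<in>K. c a * monomial a z)" "y \<in> M" "p y \<noteq> 0"
    and \<psi>: "\<psi> ` X \<subseteq> M" "\<forall>g\<in>X. p (\<psi> g) = 0"
  shows "det (colloc_mat (\<lambda>a g. monomial a (\<psi> g)) ks gs) = 0"
proof -
  let ?s = "length ks"
  obtain C where C: "\<forall>a\<in>K. \<forall>z\<in>M. monomial a z = (\<Sum>j<?s. C a j * monomial (ks ! j) z)"
    using maximal_nonsingular_colloc_monomial_span_on_zclosure[OF dense max] by metis
  have pM: "\<forall>z\<in>M. p z = (\<Sum>j<?s. (\<Sum>a\<in>K. c a * C a j) * monomial (ks ! j) z)"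
  proof
    fix z assume "z \<in> M"
    have "p z = (\<Sum>a\<in>K. c a * (\<Sum>j<?s. C a j * monomial (ks ! j) z))"
      using p(1) C \<open>z \<in> M\<close> by simp
    also have "\<dots> = (\<Sum>j<?s. (\<Sum>a\<in>K. c a * C a j) * monomial (ks ! j) z)"
      by (simp add: sum_distrib_left sum_distrib_right mult_ac sum.swap[of _ K])
    finally show "p z = (\<Sum>j<?s. (\<Sum>a\<in>K. c a * C a j) * monomial (ks ! j) z)" .
  qed
  have zeros: "\<forall>i<?s. \<psi> (gs ! i) \<in> M \<and> p (\<psi> (gs ! i)) = 0"
  proof (intro allI impI)
    fix i assume "i < ?s"
    moreover have "set gs \<subseteq> X" "length gs = ?s"
      using max by (simp_all add: maximal_nonsingular_colloc_def nonsingular_colloc_def)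
    ultimately have "gs ! i \<in> X" by (metis nth_mem subsetD)
    then show "\<psi> (gs ! i) \<in> M \<and> p (\<psi> (gs ! i)) = 0" using \<psi> by auto
  qed
  show ?thesis
    using det_eq_0_if_vanishing_combination[OF pM p(2,3) zeros] by (simp add: colloc_mat_def)
qed

lemma det_colloc_polyfun_on:
  assumes "length gs = length ks" "\<forall>g\<in>set gs. alg_aut M (act g)"
  shows "\<exists>q\<in>polyfun. \<forall>x\<in>M. det (colloc_mat (\<lambda>a g. monomial a (act g x)) ks gs) = q x"
proof -
  obtain F where F: "\<forall>g\<in>set gs. polymap (F g) \<and> (\<forall>x\<in>M. act g x = F g x)"
    using assms(2) unfolding alg_aut_def by metis
  let ?q = "\<lambda>x. det (colloc_mat (\<lambda>a g. monomial a (F g x)) ks gs)"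
  have "?q \<in> polyfun"
    unfolding colloc_mat_def using assms(1) F
    by (intro polyfun_det[of _ "\<lambda>i j x. monomial (ks ! j) (F (gs ! i) x)", simplified])
      (auto intro: polyfun_compose polyfun_monomial)
  moreover have "\<forall>x\<in>M. det (colloc_mat (\<lambda>a g. monomial a (act g x)) ks gs) = ?q x"
    using assms(1) F by (auto simp: colloc_mat_def intro!: arg_cong[where f = det] cong_mat)
  ultimately show ?thesis by (intro bexI[where x = ?q]) simp_all
qed

lemma zclosed_det_colloc_zero_set:
  assumes "zclosed M" "length gs = length ks" "\<forall>g\<in>set gs. alg_aut M (act g)"
  shows "zclosed (M \<inter> {x. det (colloc_mat (\<lambda>a g. monomial a (act g x)) ks gs) = 0})"
proof -
  obtain q where "q \<in> polyfun" "\<forall>x\<in>M. det (colloc_mat (\<lambda>a g. monomial a (act g x)) ks gs) = q x"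
    using det_colloc_polyfun_on[OF assms(2,3)] by blast
  then show ?thesis by (rule zclosed_Int_zero_set_on[OF assms(1)])
qed

lemma ex_det_colloc_eq_0_if_not_dense:
  fixes \<phi> \<psi> :: "'g \<Rightarrow> complex^'n"
  assumes "zclosed M" and dense: "zclosure (\<phi> ` X) = M"
    and max: "\<And>L. maximal_nonsingular_colloc (\<lambda>a g. monomial a (\<phi> g)) (set L) X (ks L) (gs L)"
    and "\<psi> ` X \<subseteq> M" "zclosure (\<psi> ` X) \<noteq> M"
  shows "\<exists>L. det (colloc_mat (\<lambda>a g. monomial a (\<psi> g)) (ks L) (gs L)) = 0"
proof -
  obtain p y where p: "p \<in> polyfun" "\<forall>z\<in>\<psi> ` X. p z = 0" "y \<in> M" "p y \<noteq> 0"
    using ex_polyfun_vanishing_not_dense[OF assms(1,4,5)] by blast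
  obtain F c where "finite F" and expansion: "\<forall>z. p z = (\<Sum>a\<in>F. c a * monomial a z)"
    using polyfun_monomial_expansion[OF p(1)] by blast
  obtain L where "set L = F"
    using \<open>finite F\<close> finite_list by blast
  then show ?thesis
    using det_colloc_eq_0_if_vanishing[OF dense max[of L]] expansion p(2-4) \<open>\<psi> ` X \<subseteq> M\<close> by blast
qed

theorem lemma2p1:
  fixes M :: "(complex^'n) set"
    and G :: "('g, 'b) monoid_scheme"
    and act :: "'g \<Rightarrow> complex^'n \<Rightarrow> complex^'n"
  assumes "zclosed M" and "zirreducible M"
    and "group G" and "fin_presented G"
    and "\<And>g. g \<in> carrier G \<Longrightarrow> alg_aut M (act g)"
    and "\<And>x. x \<in> M \<Longrightarrow> act \<one>\<^bsub>G\<^esub> x = x"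
    and "\<And>g h x. g \<in> carrier G \<Longrightarrow> h \<in> carrier G \<Longrightarrow> x \<in> M \<Longrightarrow>
           act (g \<otimes>\<^bsub>G\<^esub> h) x = act g (act h x)"
    and "\<exists>x0\<in>M. zclosure {act g x0 | g. g \<in> carrier G} = M"
  shows "\<exists>Y :: nat \<Rightarrow> (complex^'n) set.
           (\<forall>k. zclosed (Y k) \<and> Y k \<subset> M) \<and>
           (\<forall>x\<in>M - (\<Union>k. Y k). zclosure {act g x | g. g \<in> carrier G} = M)"
proof -
  obtain x0 where "x0 \<in> M" and dense: "zclosure ((\<lambda>g. act g x0) ` carrier G) = M"
    using assms(8) unfolding Setcompr_eq_image by blast
  have orbit_in_M: "(\<lambda>g. act g x) ` carrier G \<subseteq> M" if "x \<in> M" for x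
    using assms(5) that unfolding alg_aut_def by blast
  obtain ks gs where max:
    "\<And>L. maximal_nonsingular_colloc (\<lambda>a g. monomial a (act g x0)) (set L) (carrier G) (ks L) (gs L)"
    using ex_maximal_nonsingular_colloc[OF finite_set] by metis
  then have gs: "length (gs L) = length (ks L)" "set (gs L) \<subseteq> carrier G" for L
    by (auto simp: maximal_nonsingular_colloc_def nonsingular_colloc_def)
  define Y where
    "Y k = M \<inter> {x. det (colloc_mat (\<lambda>a g. monomial a (act g x)) (ks (from_nat k)) (gs (from_nat k))) = 0}"
    for k
  have closed: "zclosed (Y k)" for k
    unfolding Y_def using zclosed_det_colloc_zero_set[OF assms(1) gs(1)] gs(2) assms(5) by blast
  have proper: "Y k \<subset> M" for k
    using max[of "from_nat k"] \<open>x0 \<in> M\<close>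
    by (auto simp: Y_def maximal_nonsingular_colloc_def nonsingular_colloc_def)
  have not_dense_in_Y: "x \<in> (\<Union>k. Y k)"
    if "x \<in> M" and not_dense: "zclosure ((\<lambda>g. act g x) ` carrier G) \<noteq> M" for x
  proof -
    obtain L where "det (colloc_mat (\<lambda>a g. monomial a (act g x)) (ks L) (gs L)) = 0"
      using ex_det_colloc_eq_0_if_not_dense[OF assms(1) dense max orbit_in_M[OF \<open>x \<in> M\<close>] not_dense]
      by blast
    then have "x \<in> Y (to_nat L)" using \<open>x \<in> M\<close> by (simp add: Y_def)
    then show ?thesis by blast
  qed
  show ?thesis
    unfolding Setcompr_eq_image
    by (intro exI[of _ Y] conjI allI ballI closed proper) (use not_dense_in_Y in blast)
qed

end
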